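(* Let $\mathcal{E}_1=[\theta_1,u_1]$ and $\mathcal{E}_2=[\theta_2,u_2]$ be interval effect algebras, each generating its ordered linear space, each having an order-determining set of states, and each unrestricted. Let $\mathcal{I}$ be an operation from $\mathcal{E}_1$ to $\mathcal{E}_2$. Then: (i) there exists a unique affine map $\mathcal{I}^*\colon\mathcal{E}_2\to\mathcal{E}_1$ such that $s[\mathcal{I}^*(a)]=\mathcal{I}(s)(a)$ for all $s\in\mathcal{S}(\mathcal{E}_1)$ and all $a\in\mathcal{E}_2$; (ii) $\mathcal{I}$ is a channel if and only if $\mathcal{I}^*(u_2)=u_1$.
   Context: Let $V$ be a real vector space with zero $\theta$ and $K\subseteq V$ a positive cone ($\mathbb{R}^+K\subseteq K$, $K+K\subseteq K$, $K\cap(-K)=\{\theta\}$), with partial order $x\le y$ iff $y-x\in K$. For $u\in K$, $u\ne\theta$, the interval effect algebra is $\mathcal{E}=[\theta,u]=\{x\in K: x\le u\}$; for $a,b\in\mathcal{E}$ write $a\perp b$ if $a+b\le u$ (then $a+b\in\mathcal{E}$). $\mathcal{E}$ generates $V$ means $K=\mathbb{R}^+\mathcal{E}$ and $V=K-K$. A state on $\mathcal{E}$ is a map $s\colon\mathcal{E}\to[0,1]$ with $s(u)=1$ and $s(a+b)=s(a)+s(b)$ whenever $a\perp b$; $\mathcal{S}(\mathcal{E})$ denotes the (convex) set of all states. The states are order-determining: for $a,b\in\mathcal{E}$, $a\le b$ iff $s(a)\le s(b)$ for all $s\in\mathcal{S}(\mathcal{E})$. A map between convex sets is affine if it preserves finite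 convex combinations. $\mathcal{E}$ is unrestricted if for every affine $f\colon\mathcal{S}(\mathcal{E})\to[0,1]$ there is $a\in\mathcal{E}$ with $f(s)=s(a)$ for all $s\in\mathcal{S}(\mathcal{E})$. A substate on $\mathcal{E}$ is a function $f=\lambda s$ on $\mathcal{E}$ with $\lambda\in[0,1]$, $s\in\mathcal{S}(\mathcal{E})$; $\mathrm{Sub}(\mathcal{S}(\mathcal{E}))$ is the set of substates. An operation from $\mathcal{E}_1$ to $\mathcal{E}_2$ is an affine map $\mathcal{I}\colon\mathcal{S}(\mathcal{E}_1)\to\mathrm{Sub}(\mathcal{S}(\mathcal{E}_2))$ (convex combinations of substates taken pointwise); it is a channel if $\mathcal{I}(s)\in\mathcal{S}(\mathcal{E}_2)$ for all $s\in\mathcal{S}(\mathcal{E}_1)$. *)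

theory Defs
  imports "HOL-Analysis.Analysis" "HOL-Library.FuncSet"
begin

definition positive_cone :: "'a::real_vector set \<Rightarrow> bool" where
  "positive_cone K \<longleftrightarrow>
     (\<forall>r x. 0 \<le> r \<and> x \<in> K \<longrightarrow> r *\<^sub>R x \<in> K) \<and>
     (\<forall>x\<in>K. \<forall>y\<in>K. x + y \<in> K) \<and>
     K \<inter> uminus ` K = {0}"

definition cone_le :: "'a::real_vector set \<Rightarrow> 'a \<Rightarrow> 'a \<Rightarrow> bool" where
  "cone_le K x y \<longleftrightarrow> y - x \<in> K"

definition effect_interval :: "'a::real_vector set \<Rightarrow> 'a \<Rightarrow> 'a set" where
  "effect_interval K u = {x \<in> K. cone_le K x u}"

definition interval_effect_algebra :: "'a::real_vector set \<Rightarrow> 'a \<Rightarrow> bool" where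
  "interval_effect_algebra K u \<longleftrightarrow> positive_cone K \<and> u \<in> K \<and> u \<noteq> 0"

definition generates :: "'a::real_vector set \<Rightarrow> 'a \<Rightarrow> bool" where
  "generates K u \<longleftrightarrow>
     K = {r *\<^sub>R x | r x. 0 \<le> r \<and> x \<in> effect_interval K u} \<and>
     (UNIV :: 'a set) = {x - y | x y. x \<in> K \<and> y \<in> K}"

text \<open>States, represented extensionally: functions that vanish outside the effect algebra.\<close>
definition states :: "'a::real_vector set \<Rightarrow> 'a \<Rightarrow> ('a \<Rightarrow> real) set" where
  "states K u = {s. (\<forall>a. a \<notin> effect_interval K u \<longrightarrow> s a = 0) \<and>
     (\<forall>a\<in>effect_interval K u. 0 \<le> s a \<and> s a \<le> 1) \<and> s u = 1 \<and>
     (\<forall>a\<in>effect_interval K u. \<forall>b\<in>effect_interval K u.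
        cone_le K (a + b) u \<longrightarrow> s (a + b) = s a + s b)}"

definition order_determining :: "'a::real_vector set \<Rightarrow> 'a \<Rightarrow> bool" where
  "order_determining K u \<longleftrightarrow>
     (\<forall>a\<in>effect_interval K u. \<forall>b\<in>effect_interval K u.
        cone_le K a b \<longleftrightarrow> (\<forall>s\<in>states K u. s a \<le> s b))"

definition affine_on_vecs :: "'a::real_vector set \<Rightarrow> ('a \<Rightarrow> 'c::real_vector) \<Rightarrow> bool" where
  "affine_on_vecs A f \<longleftrightarrow>
     (\<forall>(I::nat set) w p. finite I \<and> (\<forall>i\<in>I. 0 \<le> w i \<and> p i \<in> A) \<and> sum w I = 1 \<longrightarrow>
        f (\<Sum>i\<in>I. w i *\<^sub>R p i) = (\<Sum>i\<in>I. w i *\<^sub>R f (p i)))"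

definition affine_on_funs_real :: "('a \<Rightarrow> real) set \<Rightarrow> (('a \<Rightarrow> real) \<Rightarrow> real) \<Rightarrow> bool" where
  "affine_on_funs_real C f \<longleftrightarrow>
     (\<forall>(I::nat set) w p. finite I \<and> (\<forall>i\<in>I. 0 \<le> w i \<and> p i \<in> C) \<and> sum w I = 1 \<longrightarrow>
        f (\<lambda>x. \<Sum>i\<in>I. w i * p i x) = (\<Sum>i\<in>I. w i * f (p i)))"

definition affine_on_funs_fun ::
    "('a \<Rightarrow> real) set \<Rightarrow> (('a \<Rightarrow> real) \<Rightarrow> ('b \<Rightarrow> real)) \<Rightarrow> bool" where
  "affine_on_funs_fun C F \<longleftrightarrow>
     (\<forall>(I::nat set) w p. finite I \<and> (\<forall>i\<in>I. 0 \<le> w i \<and> p i \<in> C) \<and> sum w I = 1 \<longrightarrow>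
        F (\<lambda>x. \<Sum>i\<in>I. w i * p i x) = (\<lambda>y. \<Sum>i\<in>I. w i * F (p i) y))"

definition unrestricted :: "'a::real_vector set \<Rightarrow> 'a \<Rightarrow> bool" where
  "unrestricted K u \<longleftrightarrow>
     (\<forall>f. (\<forall>s\<in>states K u. 0 \<le> f s \<and> f s \<le> 1) \<and> affine_on_funs_real (states K u) f \<longrightarrow>
        (\<exists>a\<in>effect_interval K u. \<forall>s\<in>states K u. f s = s a))"

definition substates :: "'a::real_vector set \<Rightarrow> 'a \<Rightarrow> ('a \<Rightarrow> real) set" where
  "substates K u = {(\<lambda>x. l * s x) | l s. 0 \<le> l \<and> l \<le> 1 \<and> s \<in> states K u}"

definition operation ::
    "'a::real_vector set \<Rightarrow> 'a \<Rightarrow> 'b::real_vector set \<Rightarrow> 'b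
     \<Rightarrow> (('a \<Rightarrow> real) \<Rightarrow> ('b \<Rightarrow> real)) \<Rightarrow> bool" where
  "operation K1 u1 K2 u2 Op \<longleftrightarrow>
     (\<forall>s\<in>states K1 u1. Op s \<in> substates K2 u2) \<and> affine_on_funs_fun (states K1 u1) Op"

definition channel ::
    "'a::real_vector set \<Rightarrow> 'a \<Rightarrow> 'b::real_vector set \<Rightarrow> 'b
     \<Rightarrow> (('a \<Rightarrow> real) \<Rightarrow> ('b \<Rightarrow> real)) \<Rightarrow> bool" where
  "channel K1 u1 K2 u2 Op \<longleftrightarrow>
     operation K1 u1 K2 u2 Op \<and> (\<forall>s\<in>states K1 u1. Op s \<in> states K2 u2)"

definition dual_map ::
    "'a::real_vector set \<Rightarrow> 'a \<Rightarrow> 'b::real_vector set \<Rightarrow> 'b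
     \<Rightarrow> (('a \<Rightarrow> real) \<Rightarrow> ('b \<Rightarrow> real)) \<Rightarrow> ('b \<Rightarrow> 'a) \<Rightarrow> bool" where
  "dual_map K1 u1 K2 u2 Op D \<longleftrightarrow>
     D \<in> effect_interval K2 u2 \<rightarrow>\<^sub>E effect_interval K1 u1 \<and>
     affine_on_vecs (effect_interval K2 u2) D \<and>
     (\<forall>s\<in>states K1 u1. \<forall>a\<in>effect_interval K2 u2. s (D a) = Op s a)"

end

theory Submission
  imports Defs
begin

(* Write I = Op and I* = D.  For an effect a of E2, the map s |-> I(s)(a) is an affine
   [0,1]-valued function on the states of E1, so unrestrictedness of E1 provides an effect I*(a)
   representing it; I*(a) is unique because the states of E1 separate effects (they are order
   determining and K1 meets -K1 only in 0).
   Affinity of I* is tested on states: a state is additive and monotone along each segment [0,x],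
   hence s(r x) = r s(x), so states and substates commute with subconvex combinations.
   Writing I(s) = l t with t a state, I(s)(u2) = l = s(I*(u2)); so I is a channel iff
   s(I*(u2)) = 1 = s(u1) for all states s, i.e. iff I*(u2) = u1. *)

lemma additive_on_unit_interval_grid:
  fixes f :: "real \<Rightarrow> real"
  assumes add: "\<And>a b. 0 \<le> a \<Longrightarrow> 0 \<le> b \<Longrightarrow> a + b \<le> 1 \<Longrightarrow> f (a + b) = f a + f b"
    and "0 < n" "k \<le> n"
  shows "f (real k / real n) = real k / real n * f 1"
proof -
  have multiple: "f (real k / real n) = real k * f (1 / real n)" if "k \<le> n" for k
    using that
  proof (induction k)
    case 0
    show ?case using add[of 0 0] by simp
  next
    case (Suc k)
    have "real (Suc k) / real n = real k / real n + 1 / real n"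
      by (simp add: add_divide_distrib)
    moreover have "real k / real n + 1 / real n \<le> 1"
      using Suc.prems by (simp flip: add_divide_distrib)
    ultimately show ?case
      using add[of "real k / real n" "1 / real n"] Suc by (simp add: algebra_simps)
  qed
  show ?thesis
    using multiple[OF assms(3)] multiple[of n] assms(2) by simp
qed

lemma additive_mono_on_unit_interval_linear:
  fixes f :: "real \<Rightarrow> real"
  assumes add: "\<And>a b. 0 \<le> a \<Longrightarrow> 0 \<le> b \<Longrightarrow> a + b \<le> 1 \<Longrightarrow> f (a + b) = f a + f b"
    and mono: "\<And>a b. 0 \<le> a \<Longrightarrow> a \<le> b \<Longrightarrow> b \<le> 1 \<Longrightarrow> f a \<le> f b"
    and t: "0 \<le> t" "t \<le> 1"
  shows "f t = t * f 1"
proof -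
  have grid: "f (real k / real n) = real k / real n * f 1" if "0 < n" "k \<le> n" for k n :: nat
    using additive_on_unit_interval_grid[of f n k] add that by blast
  have "real n * \<bar>f t - t * f 1\<bar> \<le> f 1" if n: "0 < n" for n :: nat
  proof -
    define lo where "lo = nat \<lfloor>t * real n\<rfloor>"
    define hi where "hi = nat \<lceil>t * real n\<rceil>"
    have "t * real n \<le> real n" using t by (simp add: mult_left_le_one_le)
    then have hi_le: "hi \<le> n" and lo_le: "lo \<le> hi"
      unfolding lo_def hi_def by (simp_all add: ceiling_le_iff nat_mono)
    have lo_t: "real lo / real n \<le> t" and t_hi: "t \<le> real hi / real n"
      using n t unfolding lo_def hi_def by (simp_all add: divide_le_eq le_divide_eq)
    have gap: "real hi - real lo \<le> 1"
      unfolding lo_def hi_def using t ceiling_diff_floor_le_1[of "t * real n"] by simp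
    have f1: "0 \<le> f 1" using mono[of 0 1] add[of 0 0] by simp
    have "real lo / real n * f 1 \<le> f t" "f t \<le> real hi / real n * f 1"
      using mono[OF _ lo_t t(2)] mono[OF t(1) t_hi] grid[OF n] hi_le lo_le n by auto
    moreover have "real lo / real n * f 1 \<le> t * f 1" "t * f 1 \<le> real hi / real n * f 1"
      using mult_right_mono[OF lo_t f1] mult_right_mono[OF t_hi f1] by simp_all
    moreover have "real hi / real n * f 1 - real lo / real n * f 1 \<le> f 1 / real n"
      using divide_right_mono[OF mult_right_mono[OF gap f1], of "real n"]
      by (simp add: left_diff_distrib diff_divide_distrib)
    ultimately have "\<bar>f t - t * f 1\<bar> \<le> f 1 / real n" by linarith
    then show ?thesis using n by (simp add: le_divide_eq mult.commute)
  qed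
  then have "\<bar>f t - t * f 1\<bar> = 0" by (intro real_archimedian_rdiv_eq_0) auto
  then show ?thesis by simp
qed

lemma positive_cone_zero: "positive_cone K \<Longrightarrow> 0 \<in> K"
  unfolding positive_cone_def by blast

lemma positive_cone_add: "positive_cone K \<Longrightarrow> x \<in> K \<Longrightarrow> y \<in> K \<Longrightarrow> x + y \<in> K"
  unfolding positive_cone_def by blast

lemma positive_cone_scaleR: "positive_cone K \<Longrightarrow> 0 \<le> r \<Longrightarrow> x \<in> K \<Longrightarrow> r *\<^sub>R x \<in> K"
  unfolding positive_cone_def by blast

lemma positive_cone_antisym: "positive_cone K \<Longrightarrow> x \<in> K \<Longrightarrow> - x \<in> K \<Longrightarrow> x = 0"
  unfolding positive_cone_def by (metis IntI image_eqI minus_minus singletonD)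

lemma positive_cone_sum:
  assumes "positive_cone K"
  shows "finite I \<Longrightarrow> (\<And>i. i \<in> I \<Longrightarrow> x i \<in> K) \<Longrightarrow> sum x I \<in> K"
  by (induction I rule: finite_induct) (auto intro: positive_cone_add positive_cone_zero assms)

lemma state_bounds: "s \<in> states K u \<Longrightarrow> a \<in> effect_interval K u \<Longrightarrow> 0 \<le> s a \<and> s a \<le> 1"
  by (simp add: states_def)

lemma state_unit: "s \<in> states K u \<Longrightarrow> s u = 1"
  by (simp add: states_def)

lemma state_additive:
  "s \<in> states K u \<Longrightarrow> a \<in> effect_interval K u \<Longrightarrow> b \<in> effect_interval K u
   \<Longrightarrow> a + b \<in> effect_interval K u \<Longrightarrow> s (a + b) = s a + s b"
  by (simp add: states_def effect_interval_def)

lemma substateE: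
  assumes "f \<in> substates K u"
  obtains l t where "0 \<le> l" "l \<le> 1" "t \<in> states K u" "f = (\<lambda>x. l * t x)"
  using assms unfolding substates_def by blast

lemma substate_bounds:
  "f \<in> substates K u \<Longrightarrow> a \<in> effect_interval K u \<Longrightarrow> 0 \<le> f a \<and> f a \<le> 1"
  by (elim substateE) (auto simp: mult_le_one dest: state_bounds)

locale cone_interval =
  fixes K :: "'a::real_vector set" and u :: 'a
  assumes cone: "positive_cone K" and unit_in_cone: "u \<in> K"
begin

abbreviation E :: "'a set" where "E \<equiv> effect_interval K u"

lemma zero_mem: "0 \<in> E"
  using cone unit_in_cone by (simp add: effect_interval_def cone_le_def positive_cone_zero)

lemma unit_mem: "u \<in> E"
  using cone unit_in_cone by (simp add: effect_interval_def cone_le_def positive_cone_zero)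

lemma subconvex_mem:
  assumes "finite I" and "\<And>i. i \<in> I \<Longrightarrow> 0 \<le> w i \<and> p i \<in> E" and "sum w I \<le> 1"
  shows "(\<Sum>i\<in>I. w i *\<^sub>R p i) \<in> E"
proof -
  have p: "p i \<in> K" "u - p i \<in> K" if "i \<in> I" for i
    using assms(2)[OF that] by (auto simp: effect_interval_def cone_le_def)
  have "u - (\<Sum>i\<in>I. w i *\<^sub>R p i) = (1 - sum w I) *\<^sub>R u + (\<Sum>i\<in>I. w i *\<^sub>R (u - p i))"
    by (simp add: scaleR_right_diff_distrib sum_subtractf scaleR_left_diff_distrib scaleR_sum_left)
  moreover have "(1 - sum w I) *\<^sub>R u \<in> K"
    using positive_cone_scaleR[OF cone] assms(3) unit_in_cone by simp
  moreover have "(\<Sum>i\<in>I. w i *\<^sub>R (u - p i)) \<in> K" "(\<Sum>i\<in>I. w i *\<^sub>R p i) \<in> K"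
    using assms(1,2) p by (auto intro!: positive_cone_sum[OF cone] positive_cone_scaleR[OF cone])
  ultimately show ?thesis
    using positive_cone_add[OF cone] by (auto simp: effect_interval_def cone_le_def)
qed

lemma scaleR_mem: "x \<in> E \<Longrightarrow> 0 \<le> r \<Longrightarrow> r \<le> 1 \<Longrightarrow> r *\<^sub>R x \<in> E"
  using subconvex_mem[of "{()}" "\<lambda>_. r" "\<lambda>_. x"] by simp

lemma state_mono:
  assumes s: "s \<in> states K u" and "a \<in> E" "b \<in> E" and "b - a \<in> K"
  shows "s a \<le> s b"
proof -
  have "(u - b) + a \<in> K"
    using assms(2,3) positive_cone_add[OF cone] by (auto simp: effect_interval_def cone_le_def)
  then have "b - a \<in> E"
    using assms(4) by (auto simp: effect_interval_def cone_le_def algebra_simps)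
  then have "s b = s a + s (b - a)"
    using state_additive[OF s \<open>a \<in> E\<close>, of "b - a"] \<open>b \<in> E\<close> by simp
  then show ?thesis using state_bounds[OF s \<open>b - a \<in> E\<close>] by simp
qed

lemma state_scaleR:
  assumes s: "s \<in> states K u" and x: "x \<in> E" and r: "0 \<le> r" "r \<le> 1"
  shows "s (r *\<^sub>R x) = r * s x"
proof -
  have "s (r *\<^sub>R x) = r * s (1 *\<^sub>R x)"
  proof (rule additive_mono_on_unit_interval_linear[of "\<lambda>r. s (r *\<^sub>R x)", OF _ _ r])
    fix a b :: real assume "0 \<le> a" "0 \<le> b" "a + b \<le> 1"
    then have "a *\<^sub>R x \<in> E" "b *\<^sub>R x \<in> E" "a *\<^sub>R x + b *\<^sub>R x \<in> E"
      using scaleR_mem[OF x] by (simp_all flip: scaleR_left_distrib)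
    then show "s ((a + b) *\<^sub>R x) = s (a *\<^sub>R x) + s (b *\<^sub>R x)"
      using state_additive[OF s] by (simp add: scaleR_left_distrib)
  next
    fix a b :: real assume "0 \<le> a" "a \<le> b" "b \<le> 1"
    moreover have "b *\<^sub>R x - a *\<^sub>R x = (b - a) *\<^sub>R x" by (simp add: scaleR_left_diff_distrib)
    moreover have "x \<in> K" using x by (simp add: effect_interval_def)
    ultimately show "s (a *\<^sub>R x) \<le> s (b *\<^sub>R x)"
      using state_mono[OF s] scaleR_mem[OF x] positive_cone_scaleR[OF cone] by simp
  qed
  then show ?thesis by simp
qed

lemma state_sum:
  assumes s: "s \<in> states K u"
  shows "finite I \<Longrightarrow> (\<And>i. i \<in> I \<Longrightarrow> 0 \<le> w i \<and> p i \<in> E) \<Longrightarrow> sum w I \<le> 1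
    \<Longrightarrow> s (\<Sum>i\<in>I. w i *\<^sub>R p i) = (\<Sum>i\<in>I. w i * s (p i))"
proof (induction I rule: finite_induct)
  case empty
  then show ?case using state_additive[OF s zero_mem zero_mem] zero_mem by simp
next
  case (insert j I)
  have j: "0 \<le> w j" "p j \<in> E" using insert.prems by auto
  have "0 \<le> sum w I" using insert.prems(1) by (auto intro: sum_nonneg)
  then have wI: "sum w I \<le> 1" and wj: "w j \<le> 1" using insert.prems(2) insert.hyps j(1) by auto
  have "(\<Sum>i\<in>insert j I. w i *\<^sub>R p i) \<in> E"
    using subconvex_mem[of "insert j I"] insert by blast
  moreover have "(\<Sum>i\<in>I. w i *\<^sub>R p i) \<in> E"
    using subconvex_mem[of I] insert.hyps insert.prems wI by blast
  ultimately have "s (\<Sum>i\<in>insert j I. w i *\<^sub>R p i) = s (w j *\<^sub>R p j) + s (\<Sum>i\<in>I. w i *\<^sub>R p i)"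
    using state_additive[OF s scaleR_mem[OF j(2) j(1) wj]] insert.hyps by simp
  also have "\<dots> = w j * s (p j) + (\<Sum>i\<in>I. w i * s (p i))"
    using state_scaleR[OF s j(2) j(1) wj] insert.IH insert.prems wI by auto
  finally show ?case using insert.hyps by simp
qed

lemma substate_sum:
  "f \<in> substates K u \<Longrightarrow> finite I \<Longrightarrow> (\<And>i. i \<in> I \<Longrightarrow> 0 \<le> w i \<and> p i \<in> E) \<Longrightarrow> sum w I \<le> 1
    \<Longrightarrow> f (\<Sum>i\<in>I. w i *\<^sub>R p i) = (\<Sum>i\<in>I. w i * f (p i))"
  by (elim substateE) (simp add: state_sum sum_distrib_left algebra_simps)

lemma states_separate:
  assumes "order_determining K u" and "a \<in> E" "b \<in> E" and "\<And>s. s \<in> states K u \<Longrightarrow> s a = s b"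
  shows "a = b"
proof -
  have "\<forall>s\<in>states K u. s a \<le> s b" "\<forall>s\<in>states K u. s b \<le> s a"
    by (simp_all add: assms(4))
  then have "cone_le K a b" "cone_le K b a"
    using assms(1-3) unfolding order_determining_def by blast+
  then have "b - a \<in> K" "- (b - a) \<in> K" by (auto simp: cone_le_def)
  then show ?thesis using positive_cone_antisym[OF cone] by force
qed

end

lemma operation_represented:
  assumes "unrestricted K1 u1" and op: "operation K1 u1 K2 u2 Op" and "a \<in> effect_interval K2 u2"
  shows "\<exists>b\<in>effect_interval K1 u1. \<forall>s\<in>states K1 u1. s b = Op s a"
proof -
  have "\<forall>s\<in>states K1 u1. 0 \<le> Op s a \<and> Op s a \<le> 1"
    using op assms(3) by (auto simp: operation_def dest: substate_bounds)
  moreover have "affine_on_funs_real (states K1 u1) (\<lambda>s. Op s a)"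
    using op unfolding operation_def affine_on_funs_fun_def affine_on_funs_real_def
    by (simp add: fun_eq_iff)
  ultimately show ?thesis using assms(1) unfolding unrestricted_def by fastforce
qed

lemma representing_map_affine:
  assumes "cone_interval K1 u1" "cone_interval K2 u2"
    and od: "order_determining K1 u1" and op: "operation K1 u1 K2 u2 Op"
    and D_mem: "\<And>a. a \<in> effect_interval K2 u2 \<Longrightarrow> D a \<in> effect_interval K1 u1"
    and D_rep: "\<And>s a. s \<in> states K1 u1 \<Longrightarrow> a \<in> effect_interval K2 u2 \<Longrightarrow> s (D a) = Op s a"
  shows "affine_on_vecs (effect_interval K2 u2) D"
  unfolding affine_on_vecs_def
proof (intro allI impI, elim conjE)
  interpret E1: cone_interval K1 u1 by fact
  interpret E2: cone_interval K2 u2 by fact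
  fix I :: "nat set" and w :: "nat \<Rightarrow> real" and p
  assume I: "finite I" "\<forall>i\<in>I. 0 \<le> w i \<and> p i \<in> E2.E" "sum w I = 1"
  have p: "\<And>i. i \<in> I \<Longrightarrow> 0 \<le> w i \<and> p i \<in> E2.E"
    and Dp: "\<And>i. i \<in> I \<Longrightarrow> 0 \<le> w i \<and> D (p i) \<in> E1.E"
    using I(2) D_mem by auto
  have comb: "(\<Sum>i\<in>I. w i *\<^sub>R p i) \<in> E2.E"
    using E2.subconvex_mem[OF I(1) p] I(3) by simp
  have Dcomb: "(\<Sum>i\<in>I. w i *\<^sub>R D (p i)) \<in> E1.E"
    using E1.subconvex_mem[OF I(1) Dp] I(3) by simp
  show "D (\<Sum>i\<in>I. w i *\<^sub>R p i) = (\<Sum>i\<in>I. w i *\<^sub>R D (p i))"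
  proof (rule E1.states_separate[OF od D_mem[OF comb] Dcomb])
    fix s assume s: "s \<in> states K1 u1"
    then have Op_s: "Op s \<in> substates K2 u2"
      using op by (simp add: operation_def)
    have "s (D (\<Sum>i\<in>I. w i *\<^sub>R p i)) = Op s (\<Sum>i\<in>I. w i *\<^sub>R p i)"
      using D_rep[OF s comb] .
    also have "\<dots> = (\<Sum>i\<in>I. w i * Op s (p i))"
      using E2.substate_sum[OF Op_s I(1) p] I(3) by simp
    also have "\<dots> = (\<Sum>i\<in>I. w i * s (D (p i)))"
      using D_rep[OF s] p by simp
    also have "\<dots> = s (\<Sum>i\<in>I. w i *\<^sub>R D (p i))"
      using E1.state_sum[OF s I(1) Dp] I(3) by simp
    finally show "s (D (\<Sum>i\<in>I. w i *\<^sub>R p i)) = s (\<Sum>i\<in>I. w i *\<^sub>R D (p i))" .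
  qed
qed

lemma dual_map_exists:
  assumes "cone_interval K1 u1" "cone_interval K2 u2"
    and "order_determining K1 u1" and "unrestricted K1 u1" and op: "operation K1 u1 K2 u2 Op"
  shows "\<exists>D. dual_map K1 u1 K2 u2 Op D"
proof -
  obtain rep where rep: "\<forall>a\<in>effect_interval K2 u2.
      rep a \<in> effect_interval K1 u1 \<and> (\<forall>s\<in>states K1 u1. s (rep a) = Op s a)"
    using operation_represented[OF assms(4) op] by metis
  define D where "D = restrict rep (effect_interval K2 u2)"
  have "D \<in> effect_interval K2 u2 \<rightarrow>\<^sub>E effect_interval K1 u1"
    and "\<forall>s\<in>states K1 u1. \<forall>a\<in>effect_interval K2 u2. s (D a) = Op s a"
    using rep by (simp_all add: D_def)
  moreover have "affine_on_vecs (effect_interval K2 u2) D"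
    using representing_map_affine[OF assms(1-3) op] calculation by (auto simp: PiE_iff)
  ultimately show ?thesis
    unfolding dual_map_def by blast
qed

lemma dual_map_unique:
  assumes "cone_interval K1 u1" and "order_determining K1 u1"
    and "dual_map K1 u1 K2 u2 Op D" and "dual_map K1 u1 K2 u2 Op D'"
  shows "D = D'"
proof (rule PiE_ext)
  show "D \<in> effect_interval K2 u2 \<rightarrow>\<^sub>E effect_interval K1 u1"
    "D' \<in> effect_interval K2 u2 \<rightarrow>\<^sub>E effect_interval K1 u1"
    using assms(3,4) by (simp_all add: dual_map_def)
  fix a assume "a \<in> effect_interval K2 u2"
  with assms show "D a = D' a"
    by (intro cone_interval.states_separate[OF assms(1,2)]) (auto simp: dual_map_def)
qed

lemma dual_map_channel_iff:
  assumes "cone_interval K1 u1" "cone_interval K2 u2"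
    and od: "order_determining K1 u1" and op: "operation K1 u1 K2 u2 Op"
    and "dual_map K1 u1 K2 u2 Op D"
  shows "channel K1 u1 K2 u2 Op \<longleftrightarrow> D u2 = u1"
proof -
  interpret E1: cone_interval K1 u1 by fact
  interpret E2: cone_interval K2 u2 by fact
  have Du2: "D u2 \<in> E1.E" "\<And>s. s \<in> states K1 u1 \<Longrightarrow> s (D u2) = Op s u2"
    using assms(5) E2.unit_mem by (auto simp: dual_map_def)
  show ?thesis
  proof
    assume "channel K1 u1 K2 u2 Op"
    then have "Op s \<in> states K2 u2" if "s \<in> states K1 u1" for s
      using that by (simp add: channel_def)
    then have "s (D u2) = s u1" if "s \<in> states K1 u1" for s
      using that Du2(2) state_unit by metis
    then show "D u2 = u1"
      using E1.states_separate[OF od Du2(1) E1.unit_mem] by blast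
  next
    assume "D u2 = u1"
    have "Op s \<in> states K2 u2" if s: "s \<in> states K1 u1" for s
    proof -
      have "Op s \<in> substates K2 u2"
        using op s by (simp add: operation_def)
      then obtain l t where lt: "t \<in> states K2 u2" "Op s = (\<lambda>x. l * t x)"
        by (elim substateE)
      have "l = 1"
        using Du2(2)[OF s] \<open>D u2 = u1\<close> state_unit[OF s] state_unit[OF lt(1)] lt(2) by simp
      then show ?thesis using lt by simp
    qed
    then show "channel K1 u1 K2 u2 Op"
      using op by (simp add: channel_def)
  qed
qed

theorem lemma3p1:
  fixes K1 :: "'a::real_vector set" and u1 :: 'a
    and K2 :: "'b::real_vector set" and u2 :: 'b
    and Op :: "('a \<Rightarrow> real) \<Rightarrow> ('b \<Rightarrow> real)"
  assumes "interval_effect_algebra K1 u1" and "interval_effect_algebra K2 u2"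
    and "generates K1 u1" and "generates K2 u2"
    and "order_determining K1 u1" and "order_determining K2 u2"
    and "unrestricted K1 u1" and "unrestricted K2 u2"
    and "operation K1 u1 K2 u2 Op"
  shows "(\<exists>!D. dual_map K1 u1 K2 u2 Op D) \<and>
         (\<forall>D. dual_map K1 u1 K2 u2 Op D \<longrightarrow> (channel K1 u1 K2 u2 Op \<longleftrightarrow> D u2 = u1))"
proof -
  have "cone_interval K1 u1" "cone_interval K2 u2"
    using assms(1,2) by (simp_all add: cone_interval_def interval_effect_algebra_def)
  then show ?thesis
    using dual_map_exists[of K1 u1 K2 u2 Op] dual_map_unique[of K1 u1 K2 u2 Op]
      dual_map_channel_iff[of K1 u1 K2 u2 Op] assms(5,7,9)
    by metis
qed

end
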